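(* Let $X_1,\dots,X_n$ be random variables and let $\epsilon_1,\dots,\epsilon_n$ be conditionally independent given $\underline{X}=(X_1,\dots,X_n)$, with $\mathbb{E}(\epsilon_i\mid\underline X)=0$, $\mathbb{V}(\epsilon_i\mid\underline X)\le\sigma^2$, and satisfying the Bernstein moment condition $\mathbb{E}(|\epsilon_i|^k\mid\underline X)\le\frac12k!\eta^{k-2}\mathbb{V}(\epsilon_i\mid\underline X)$ for $k=3,4,\dots$, with $\eta>0$. Let $\mathcal{G}$ be a countable class of measurable functions with $|g(x)|\le K$ for all $g\in\mathcal{G}$ and all $x$, and let $L:\mathcal{G}\to[0,\infty)$ satisfy $\sum_{g\in\mathcal{G}}e^{-L(g)}\le1$. Then for every $A>0$, with $\gamma=A\sigma^2/2+K\eta$, $$\mathbb{E}\sup_{g\in\mathcal{G}}\Big\{\frac1n\sum_{i=1}^n\epsilon_ig(X_i)-\frac{\gamma}{n}L(g)-\frac{1}{An}\sum_{i=1}^ng^2(X_i)\Big\}\le0.$$ *)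

theory Defs
  imports "HOL-Probability.Probability"
begin

definition gen_subalg :: "'a measure \<Rightarrow> 'x measure \<Rightarrow> ('i \<Rightarrow> 'a \<Rightarrow> 'x) \<Rightarrow> 'i set \<Rightarrow> 'a measure" where
  "gen_subalg M N X I =
     restr_to_subalg M (sigma (space M) (\<Union>i\<in>I. {X i -` B \<inter> space M | B. B \<in> sets N}))"

definition cond_var :: "'a measure \<Rightarrow> 'a measure \<Rightarrow> ('a \<Rightarrow> real) \<Rightarrow> 'a \<Rightarrow> ennreal" where
  "cond_var M F f =
     nn_cond_exp M F (\<lambda>w. ennreal ((f w - real_cond_exp M F f w)^2))"

definition cond_indep_vars :: "'a measure \<Rightarrow> 'a measure \<Rightarrow> ('i \<Rightarrow> 'a \<Rightarrow> real) \<Rightarrow> 'i set \<Rightarrow> bool" where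
  "cond_indep_vars M F e I \<longleftrightarrow>
     (\<forall>B. (\<forall>i\<in>I. B i \<in> sets borel) \<longrightarrow>
        (AE w in M. real_cond_exp M F (\<lambda>v. \<Prod>i\<in>I. indicator (B i) (e i v)) w
                  = (\<Prod>i\<in>I. real_cond_exp M F (\<lambda>v. indicator (B i) (e i v)) w)))"

end

theory Submission
  imports Defs
begin

text \<open>
  Write \<open>\<gamma> = A \<sigma>\<^sup>2 / 2 + K \<eta>\<close> and \<open>Z\<^sub>g\<close> for the penalised functional inside the
  supremum. Given the design, the \<open>\<epsilon>\<^sub>i\<close> are independent, and the Bernstein moment
  condition bounds their conditional moment generating function by
  \<open>1 + \<sigma>\<^sup>2 v\<^sup>2 / (2 (1 - \<bar>v\<bar> \<eta>))\<close>; for \<open>\<bar>v\<bar> \<le> \<bar>g(X\<^sub>i)\<bar> / \<gamma>\<close> this is at most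
  \<open>exp (g(X\<^sub>i)\<^sup>2 / (A \<gamma>))\<close>, which is exactly the quadratic penalty. Hence
  \<open>E exp ((n/\<gamma>) Z\<^sub>g) \<le> exp (-L g)\<close> for every \<open>g\<close>, and the Kraft inequality gives
  \<open>E sup\<^sub>g exp ((n/\<gamma>) Z\<^sub>g) \<le> 1\<close>. Finally \<open>1 + c s\<^sup>+ \<le> exp (c s) + c s\<^sup>-\<close> turns this
  exponential moment bound into \<open>E (sup\<^sub>g Z\<^sub>g)\<^sup>+ \<le> E (sup\<^sub>g Z\<^sub>g)\<^sup>-\<close>.
\<close>

lemma exp_minus_one_minus_sums: "(\<lambda>k. y^(k+2) / fact (k+2)) sums (exp y - 1 - (y::real))"
proof -
  have "(\<lambda>k. y^k / fact k) sums exp y"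
    using exp_converges[of y] by (simp add: divide_inverse mult.commute)
  then have "(\<lambda>k. y^(k+2) / fact (k+2)) sums (exp y - (\<Sum>k<2. y^k / fact k))"
    by (subst sums_iff_shift) simp
  then show ?thesis by (simp add: eval_nat_numeral diff_diff_add)
qed

lemma ennreal_exp_minus_one_minus_le:
  "ennreal (exp y - 1 - y) \<le> (\<Sum>k. ennreal (\<bar>y\<bar>^(k+2) / fact (k+2)))"
proof -
  have y: "(\<lambda>k. y^(k+2) / fact (k+2)) sums (exp y - 1 - y)"
    and abs_y: "(\<lambda>k. \<bar>y\<bar>^(k+2) / fact (k+2)) sums (exp \<bar>y\<bar> - 1 - \<bar>y\<bar>)"
    by (rule exp_minus_one_minus_sums)+
  have le: "exp y - 1 - y \<le> (\<Sum>k. \<bar>y\<bar>^(k+2) / fact (k+2))"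
    unfolding sums_unique[OF y]
  proof (rule suminf_le)
    have "y^n \<le> \<bar>y\<bar>^n" for n by (metis abs_ge_self power_abs)
    then show "y^(k+2) / fact (k+2) \<le> \<bar>y\<bar>^(k+2) / fact (k+2)" for k
      by (rule divide_right_mono) simp
  qed (use y abs_y sums_summable in blast)+
  have "ennreal (\<Sum>k. \<bar>y\<bar>^(k+2) / fact (k+2)) = (\<Sum>k. ennreal (\<bar>y\<bar>^(k+2) / fact (k+2)))"
    by (rule suminf_ennreal2[symmetric]) (use abs_y in \<open>auto simp: sums_iff\<close>)
  with ennreal_leI[OF le] show ?thesis by simp
qed

lemma ennreal_exp_add_neg_part:
  "ennreal (exp y) + ennreal (- y) = 1 + ennreal y + ennreal (exp y - 1 - y)"
proof -
  have rem: "0 \<le> exp y - 1 - y" using exp_ge_add_one_self[of y] by linarith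
  show ?thesis
  proof (cases "y \<ge> 0")
    case True
    have "ennreal (exp y) = ennreal (1 + y) + ennreal (exp y - 1 - y)"
      using ennreal_plus[of "1 + y" "exp y - 1 - y"] rem True by simp
    also have "ennreal (1 + y) = 1 + ennreal y"
      using ennreal_plus[of 1 y] True by simp
    finally show ?thesis using True by (simp add: ennreal_neg)
  next
    case False
    have "ennreal (exp y) + ennreal (- y) = ennreal (1 + (exp y - 1 - y))"
      using ennreal_plus[of "exp y" "- y"] False by simp
    also have "\<dots> = 1 + ennreal (exp y - 1 - y)"
      using ennreal_plus[of 1 "exp y - 1 - y"] rem by simp
    finally show ?thesis using False by (simp add: ennreal_neg)
  qed
qed

text \<open>The bound on \<open>E(exp (v \<epsilon>) | X)\<close> given by the Bernstein moment condition when
  \<open>V(\<epsilon> | X) \<le> s\<close>.\<close>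
definition bernstein_mgf :: "real \<Rightarrow> real \<Rightarrow> real \<Rightarrow> ennreal" where
  "bernstein_mgf \<eta> s v = 1 + (\<Sum>k. ennreal (\<bar>v\<bar>^(k+2) * \<eta>^k / 2)) * ennreal s"

lemma bernstein_mgf_eq:
  assumes "\<eta> \<ge> 0" "s \<ge> 0" "\<bar>v\<bar> * \<eta> < 1"
  shows "bernstein_mgf \<eta> s v = ennreal (1 + s * v^2 / (2 * (1 - \<bar>v\<bar> * \<eta>)))"
proof -
  let ?r = "v^2 / (2 * (1 - \<bar>v\<bar> * \<eta>))"
  have "(\<lambda>k. v^2 / 2 * (\<bar>v\<bar> * \<eta>)^k) sums (v^2 / 2 * (1 / (1 - \<bar>v\<bar> * \<eta>)))"
    using assms by (intro sums_mult geometric_sums) simp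
  moreover have "v^2 / 2 * (\<bar>v\<bar> * \<eta>)^k = \<bar>v\<bar>^(k+2) * \<eta>^k / 2" for k
    by (simp add: power_add power_mult_distrib power2_eq_square)
  ultimately have "(\<lambda>k. \<bar>v\<bar>^(k+2) * \<eta>^k / 2) sums ?r" by simp
  then have "(\<Sum>k. ennreal (\<bar>v\<bar>^(k+2) * \<eta>^k / 2)) = ennreal ?r"
    by (intro suminf_ennreal_eq) (use assms in auto)
  moreover have "?r \<ge> 0" using assms by simp
  then have "ennreal (1 + ?r * s) = 1 + ennreal ?r * ennreal s"
    using ennreal_plus[of 1 "?r * s"] ennreal_mult[of ?r s] assms by simp
  ultimately have "bernstein_mgf \<eta> s v = ennreal (1 + ?r * s)"
    by (simp only: bernstein_mgf_def)
  also have "?r * s = s * v^2 / (2 * (1 - \<bar>v\<bar> * \<eta>))" by simp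
  finally show ?thesis .
qed

lemma bernstein_mgf_le_exp:
  fixes A \<eta> K s \<gamma> v :: real
  assumes "A > 0" "\<eta> > 0" "K > 0" "s \<ge> 0" and \<gamma>: "\<gamma> = A * s / 2 + K * \<eta>"
    and v: "\<bar>v\<bar> \<le> K / \<gamma>"
  shows "bernstein_mgf \<eta> s v \<le> ennreal (exp (v^2 * \<gamma> / A))"
proof (cases "s = 0")
  case True
  have "0 \<le> v^2 * \<gamma> / A" using assms True by simp
  then have "ennreal 1 \<le> ennreal (exp (v^2 * \<gamma> / A))" by (intro ennreal_leI) simp
  then show ?thesis using True by (simp add: bernstein_mgf_def)
next
  case False
  with assms have "s > 0" "\<gamma> > 0" by (auto intro: add_pos_pos)
  have "\<bar>v\<bar> * \<eta> \<le> K / \<gamma> * \<eta>"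
    using v \<open>\<eta> > 0\<close> by (intro mult_right_mono) auto
  also have "K / \<gamma> * \<eta> = 1 - A * s / (2 * \<gamma>)"
    using \<open>\<gamma> > 0\<close> \<gamma> by (simp add: field_simps)
  finally have gap: "A * s / (2 * \<gamma>) \<le> 1 - \<bar>v\<bar> * \<eta>" by simp
  have gap_pos: "A * s / (2 * \<gamma>) > 0" using assms \<open>s > 0\<close> \<open>\<gamma> > 0\<close> by simp
  have "s * v^2 / (2 * (1 - \<bar>v\<bar> * \<eta>)) \<le> s * v^2 / (2 * (A * s / (2 * \<gamma>)))"
    using gap gap_pos \<open>s > 0\<close> by (intro divide_left_mono mult_left_mono mult_pos_pos) auto
  also have "\<dots> = v^2 * \<gamma> / A" using \<open>s > 0\<close> \<open>A > 0\<close> \<open>\<gamma> > 0\<close> by (simp add: field_simps)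
  finally have "1 + s * v^2 / (2 * (1 - \<bar>v\<bar> * \<eta>)) \<le> exp (v^2 * \<gamma> / A)"
    using exp_ge_add_one_self[of "s * v^2 / (2 * (1 - \<bar>v\<bar> * \<eta>))"]
    by (meson exp_le_cancel_iff order_trans)
  moreover have "bernstein_mgf \<eta> s v = ennreal (1 + s * v^2 / (2 * (1 - \<bar>v\<bar> * \<eta>)))"
    using gap gap_pos \<open>s > 0\<close> \<open>\<eta> > 0\<close> by (intro bernstein_mgf_eq) auto
  ultimately show ?thesis by (simp add: ennreal_leI)
qed

lemma exp_neg_mult_bernstein_mgf_le_1:
  fixes A \<eta> K s \<gamma> c v :: real
  assumes "A > 0" "\<eta> > 0" "K > 0" "s \<ge> 0" and \<gamma>: "\<gamma> = A * s / 2 + K * \<eta>"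
    and c: "\<bar>c\<bar> \<le> K" and v: "\<bar>v\<bar> \<le> \<bar>c\<bar> / \<gamma>"
  shows "ennreal (exp (- (c^2 / (A * \<gamma>)))) * bernstein_mgf \<eta> s v \<le> 1"
proof -
  have "\<gamma> > 0" using assms by (simp add: add_nonneg_pos)
  have "\<bar>v\<bar> \<le> K / \<gamma>" using v c \<open>\<gamma> > 0\<close> by (meson divide_right_mono less_imp_le order_trans)
  then have "ennreal (exp (- (c^2 / (A * \<gamma>)))) * bernstein_mgf \<eta> s v
      \<le> ennreal (exp (- (c^2 / (A * \<gamma>)))) * ennreal (exp (v^2 * \<gamma> / A))"
    by (intro mult_left_mono bernstein_mgf_le_exp) (use assms in auto)
  also have "\<dots> = ennreal (exp (v^2 * \<gamma> / A - c^2 / (A * \<gamma>)))"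
    by (simp add: ennreal_mult[symmetric] exp_diff exp_minus field_simps)
  also have "\<dots> \<le> 1"
  proof -
    have "v^2 \<le> (c / \<gamma>)^2"
      using v \<open>\<gamma> > 0\<close> by (metis abs_divide abs_of_pos power2_abs power_mono abs_ge_zero)
    then have "v^2 * \<gamma> / A \<le> c^2 / (A * \<gamma>)"
      using \<open>\<gamma> > 0\<close> \<open>A > 0\<close> by (simp add: field_simps power2_eq_square)
    then show ?thesis by simp
  qed
  finally show ?thesis .
qed

definition dyadic_trunc :: "nat \<Rightarrow> real \<Rightarrow> real" where
  "dyadic_trunc m y = sgn y * (of_int \<lfloor>\<bar>y\<bar> * 2^m\<rfloor> / 2^m)"

lemma abs_dyadic_trunc: "\<bar>dyadic_trunc m y\<bar> = of_int \<lfloor>\<bar>y\<bar> * 2^m\<rfloor> / 2^m"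
  by (cases "y = 0") (simp_all add: dyadic_trunc_def abs_mult)

lemma abs_dyadic_trunc_le: "\<bar>dyadic_trunc m y\<bar> \<le> \<bar>y\<bar>"
proof -
  have "of_int \<lfloor>\<bar>y\<bar> * 2^m\<rfloor> / 2^m \<le> \<bar>y\<bar> * 2^m / (2^m :: real)"
    by (intro divide_right_mono) simp_all
  then show ?thesis unfolding abs_dyadic_trunc by simp
qed

lemma dyadic_trunc_error: "\<bar>dyadic_trunc m y - y\<bar> \<le> 1 / 2^m"
proof -
  have "dyadic_trunc m y - y = sgn y * ((of_int \<lfloor>\<bar>y\<bar> * 2^m\<rfloor> - \<bar>y\<bar> * 2^m) / 2^m)"
    by (simp add: dyadic_trunc_def diff_divide_distrib right_diff_distrib mult_sgn_abs)
  moreover have "\<bar>of_int \<lfloor>\<bar>y\<bar> * 2^m\<rfloor> - \<bar>y\<bar> * 2^m\<bar> \<le> 1"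
    by linarith
  ultimately show ?thesis
    by (auto simp: abs_mult abs_sgn_eq abs_divide intro!: divide_right_mono)
qed

lemma dyadic_trunc_tendsto: "(\<lambda>m. dyadic_trunc m y) \<longlonglongrightarrow> y"
proof -
  have "(\<lambda>m. 1 / 2^m :: real) \<longlonglongrightarrow> 0"
    by (intro LIMSEQ_divide_realpow_zero) auto
  then have "(\<lambda>m. dyadic_trunc m y - y) \<longlonglongrightarrow> 0"
    by (rule Lim_null_comparison[rotated]) (simp add: dyadic_trunc_error)
  then show ?thesis by (simp add: LIM_zero_cancel)
qed

lemma dyadic_trunc_in_grid:
  assumes "\<bar>y\<bar> \<le> T"
  shows "dyadic_trunc m y \<in> (\<lambda>k. of_int k / 2^m) ` {- \<lfloor>T * 2^m\<rfloor> .. \<lfloor>T * 2^m\<rfloor>}"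
proof -
  define k where "k = \<lfloor>\<bar>y\<bar> * 2^m\<rfloor>"
  have "0 \<le> k" "k \<le> \<lfloor>T * 2^m\<rfloor>"
    using assms unfolding k_def by (auto intro!: floor_mono mult_right_mono)
  moreover have "dyadic_trunc m y = of_int (if y < 0 then - k else k) / 2^m"
    by (auto simp: dyadic_trunc_def k_def sgn_if)
  ultimately show ?thesis by (intro image_eqI) auto
qed

lemma measurable_dyadic_trunc [measurable]: "dyadic_trunc m \<in> borel_measurable borel"
  unfolding dyadic_trunc_def by measurable

lemma prod_mult_eq_sum_PiE_delta:
  fixes w :: "'i \<Rightarrow> 'b::comm_semiring_1" and g :: "'i \<Rightarrow> 'v \<Rightarrow> 'b"
  assumes "finite I" "finite V" and "\<And>i. i \<in> I \<Longrightarrow> s i \<in> V"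
  shows "(\<Prod>i\<in>I. w i * g i (s i))
    = (\<Sum>p\<in>PiE I (\<lambda>_. V). (\<Prod>i\<in>I. if s i = p i then w i else 0) * (\<Prod>i\<in>I. g i (p i)))"
proof -
  have "(\<Prod>i\<in>I. w i * g i (s i)) = (\<Prod>i\<in>I. \<Sum>v\<in>V. if s i = v then w i * g i v else 0)"
    using assms by (intro prod.cong refl) (simp add: sum.delta)
  also have "\<dots> = (\<Sum>p\<in>PiE I (\<lambda>_. V). \<Prod>i\<in>I. if s i = p i then w i * g i (p i) else 0)"
    using assms by (intro prod_sum_PiE) auto
  also have "\<dots> = (\<Sum>p\<in>PiE I (\<lambda>_. V). (\<Prod>i\<in>I. if s i = p i then w i else 0) * (\<Prod>i\<in>I. g i (p i)))"
    unfolding prod.distrib[symmetric] by (intro sum.cong prod.cong) auto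
  finally show ?thesis .
qed

lemma ennreal_one_add_mult_pos_part_le:
  fixes c s t :: real
  assumes "c > 0" "t \<ge> 0" and "1 + c * s \<le> t"
  shows "1 + ennreal c * e2ennreal (ereal s) \<le> ennreal t + ennreal c * e2ennreal (- ereal s)"
proof (cases "s \<ge> 0")
  case True
  have "1 + ennreal c * e2ennreal (ereal s) = ennreal (1 + c * s)"
    using True \<open>c > 0\<close> by (simp add: ennreal_mult ennreal_plus)
  also have "\<dots> \<le> ennreal t" using assms(3) by (rule ennreal_leI)
  finally show ?thesis by (rule order_trans) simp
next
  case False
  have "1 \<le> ennreal (t + c * (- s))" using assms(3) by (simp add: ennreal_le_1[symmetric])
  also have "\<dots> = ennreal t + ennreal (c * (- s))"
    using assms False by (intro ennreal_plus) (simp_all add: mult_nonneg_nonpos)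
  also have "\<dots> = ennreal t + ennreal c * ennreal (- s)"
    using ennreal_mult[of c "- s"] False \<open>c > 0\<close> by simp
  finally show ?thesis using False by (simp add: e2ennreal_neg ennreal_neg)
qed

lemma one_add_mult_pos_part_SUP_le:
  fixes Z :: "'g \<Rightarrow> real" and c :: real
  assumes "G \<noteq> {}" and "c > 0"
  shows "1 + ennreal c * e2ennreal (SUP g\<in>G. ereal (Z g))
     \<le> (SUP g\<in>G. ennreal (exp (c * Z g))) + ennreal c * e2ennreal (- (SUP g\<in>G. ereal (Z g)))"
proof (cases "(SUP g\<in>G. ennreal (exp (c * Z g))) = top")
  case True
  then show ?thesis by (simp only: True) simp
next
  case False
  define T where "T = (SUP g\<in>G. ennreal (exp (c * Z g)))"
  define S where "S = (SUP g\<in>G. ereal (Z g))"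
  obtain t where t: "T = ennreal t" "t \<ge> 0"
    using False unfolding T_def[symmetric] by (cases T) (auto simp: top_ennreal.rep_eq)
  have Z_le: "Z g \<le> (t - 1) / c" if "g \<in> G" for g
  proof -
    have "ennreal (exp (c * Z g)) \<le> T" unfolding T_def using that by (rule SUP_upper)
    then have "exp (c * Z g) \<le> t" using t by (simp add: ennreal_le_iff)
    then have "1 + c * Z g \<le> t" using exp_ge_add_one_self[of "c * Z g"] by linarith
    then show ?thesis using \<open>c > 0\<close> by (simp add: field_simps)
  qed
  obtain g0 where "g0 \<in> G" using \<open>G \<noteq> {}\<close> by auto
  have "S \<le> ereal ((t - 1) / c)" unfolding S_def by (rule SUP_least) (use Z_le in auto)
  moreover have "ereal (Z g0) \<le> S" unfolding S_def using \<open>g0 \<in> G\<close> by (rule SUP_upper)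
  ultimately obtain s where s: "S = ereal s" "1 + c * s \<le> t"
    using \<open>c > 0\<close> by (cases S) (auto simp: field_simps)
  show ?thesis
    unfolding T_def[symmetric] S_def[symmetric] s(1) t(1)
    using \<open>c > 0\<close> t(2) s(2) by (rule ennreal_one_add_mult_pos_part_le)
qed

lemma nn_integral_SUP_le_infsum:
  fixes f :: "'g \<Rightarrow> 'a \<Rightarrow> ennreal"
  assumes "countable G" and f: "\<And>g. g \<in> G \<Longrightarrow> f g \<in> borel_measurable M"
  shows "(\<integral>\<^sup>+x. (SUP g\<in>G. f g x) \<partial>M) \<le> (\<Sum>\<^sub>\<infinity>g\<in>G. \<integral>\<^sup>+x. f g x \<partial>M)"
proof (cases "G = {}")
  case True
  then show ?thesis by (simp add: bot_ennreal)
next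
  case False
  define H where "H m = from_nat_into G ` {..m}" for m
  have H: "finite (H m)" "H m \<subseteq> G" for m
    unfolding H_def using from_nat_into[OF False] by auto
  have "(\<Union>m. H m) = range (from_nat_into G)" unfolding H_def by auto
  then have "(\<Union>m. H m) = G" using range_from_nat_into[OF False \<open>countable G\<close>] by simp
  then have "(SUP g\<in>G. f g x) = (SUP m. SUP g\<in>H m. f g x)" for x
    by (metis SUP_UNION)
  then have "(\<integral>\<^sup>+x. (SUP g\<in>G. f g x) \<partial>M) = (\<integral>\<^sup>+x. (SUP m. SUP g\<in>H m. f g x) \<partial>M)"
    by simp
  also have "\<dots> = (SUP m. \<integral>\<^sup>+x. (SUP g\<in>H m. f g x) \<partial>M)"
  proof (rule nn_integral_monotone_convergence_SUP)
    show "incseq (\<lambda>m x. SUP g\<in>H m. f g x)"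
      unfolding incseq_def le_fun_def H_def by (auto intro!: SUP_subset_mono)
  qed (use H f in \<open>auto intro!: borel_measurable_SUP intro: countable_finite\<close>)
  also have "\<dots> \<le> (\<Sum>\<^sub>\<infinity>g\<in>G. \<integral>\<^sup>+x. f g x \<partial>M)"
  proof (rule SUP_least)
    fix m
    have "(\<integral>\<^sup>+x. (SUP g\<in>H m. f g x) \<partial>M) \<le> (\<integral>\<^sup>+x. (\<Sum>g\<in>H m. f g x) \<partial>M)"
      using H by (intro nn_integral_mono SUP_least member_le_sum) auto
    also have "\<dots> = (\<Sum>g\<in>H m. \<integral>\<^sup>+x. f g x \<partial>M)"
      using H f by (intro nn_integral_sum) auto
    also have "\<dots> \<le> (\<Sum>\<^sub>\<infinity>g\<in>G. \<integral>\<^sup>+x. f g x \<partial>M)"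
      unfolding nonneg_infsum_complete[OF zero_le] using H by (intro SUP_upper) auto
    finally show "(\<integral>\<^sup>+x. (SUP g\<in>H m. f g x) \<partial>M) \<le> (\<Sum>\<^sub>\<infinity>g\<in>G. \<integral>\<^sup>+x. f g x \<partial>M)" .
  qed
  finally show ?thesis .
qed

lemma (in prob_space) nn_integral_SUP_pos_part_le_neg_part:
  fixes Z :: "'g \<Rightarrow> 'a \<Rightarrow> real" and c :: real
  assumes "countable G" "G \<noteq> {}" "c > 0" and Z: "\<And>g. g \<in> G \<Longrightarrow> Z g \<in> borel_measurable M"
    and exp_moment: "(\<integral>\<^sup>+x. (SUP g\<in>G. ennreal (exp (c * Z g x))) \<partial>M) \<le> 1"
  shows "(\<integral>\<^sup>+x. e2ennreal (SUP g\<in>G. ereal (Z g x)) \<partial>M)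
    \<le> (\<integral>\<^sup>+x. e2ennreal (- (SUP g\<in>G. ereal (Z g x))) \<partial>M)"
proof -
  define S where "S x = (SUP g\<in>G. ereal (Z g x))" for x
  define T where "T x = (SUP g\<in>G. ennreal (exp (c * Z g x)))" for x
  have [measurable]: "S \<in> borel_measurable M" "T \<in> borel_measurable M"
    unfolding S_def T_def using \<open>countable G\<close> Z by (auto intro!: borel_measurable_SUP)
  have "1 + ennreal c * (\<integral>\<^sup>+x. e2ennreal (S x) \<partial>M) = (\<integral>\<^sup>+x. 1 + ennreal c * e2ennreal (S x) \<partial>M)"
    by (simp add: nn_integral_add nn_integral_cmult emeasure_space_1)
  also have "\<dots> \<le> (\<integral>\<^sup>+x. T x + ennreal c * e2ennreal (- S x) \<partial>M)"
    unfolding S_def T_def using \<open>G \<noteq> {}\<close> \<open>c > 0\<close>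
    by (intro nn_integral_mono one_add_mult_pos_part_SUP_le)
  also have "\<dots> = (\<integral>\<^sup>+x. T x \<partial>M) + ennreal c * (\<integral>\<^sup>+x. e2ennreal (- S x) \<partial>M)"
    by (simp add: nn_integral_add nn_integral_cmult)
  also have "\<dots> \<le> 1 + ennreal c * (\<integral>\<^sup>+x. e2ennreal (- S x) \<partial>M)"
    using exp_moment unfolding T_def by (rule add_right_mono)
  finally have "ennreal c * (\<integral>\<^sup>+x. e2ennreal (S x) \<partial>M) \<le> ennreal c * (\<integral>\<^sup>+x. e2ennreal (- S x) \<partial>M)"
    by (simp add: ennreal_add_left_cancel_le)
  then show ?thesis using \<open>c > 0\<close> by (simp add: S_def ennreal_mult_le_mult_iff)
qed

lemma degenerate_penalized_SUP_nonpos: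
  fixes e :: "nat \<Rightarrow> real" and y :: "'g \<Rightarrow> nat \<Rightarrow> real" and A \<sigma> \<eta> K :: real
  assumes "n = 0 \<or> G = {} \<or> K \<le> 0" and "A > 0"
    and y_bd: "\<And>g i. g \<in> G \<Longrightarrow> i \<in> {1..n} \<Longrightarrow> \<bar>y g i\<bar> \<le> K"
    and L_nonneg: "\<And>g. g \<in> G \<Longrightarrow> L g \<ge> 0"
  shows "(SUP g\<in>G. ereal ((1 / real n) * (\<Sum>i=1..n. e i * y g i) - (A * \<sigma>^2 / 2 + K * \<eta>) / real n * L g
    - 1 / (A * real n) * (\<Sum>i=1..n. (y g i)^2))) \<le> 0"
proof (rule SUP_least)
  fix g assume "g \<in> G"
  show "ereal ((1 / real n) * (\<Sum>i=1..n. e i * y g i) - (A * \<sigma>^2 / 2 + K * \<eta>) / real n * L g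
    - 1 / (A * real n) * (\<Sum>i=1..n. (y g i)^2)) \<le> 0"
  proof (cases "n = 0")
    case False
    then have "K = 0" using assms(1) y_bd[OF \<open>g \<in> G\<close>, of 1] \<open>g \<in> G\<close> by auto
    then have "y g i = 0" if "i \<in> {1..n}" for i using y_bd[OF \<open>g \<in> G\<close> that] by simp
    moreover have "0 \<le> (A * \<sigma>^2 / 2 + K * \<eta>) / real n * L g"
      using \<open>K = 0\<close> \<open>A > 0\<close> L_nonneg[OF \<open>g \<in> G\<close>] by simp
    ultimately show ?thesis by simp
  qed simp
qed

section \<open>Conditional expectations\<close>

context sigma_finite_subalgebra
begin

lemma nn_cond_exp_const: "AE x in M. nn_cond_exp M F (\<lambda>_. c) x = c"
  using nn_cond_exp_F_meas[of "\<lambda>_. c"] by auto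

lemma nn_cond_exp_cmult:
  assumes [measurable]: "f \<in> borel_measurable M"
  shows "AE x in M. nn_cond_exp M F (\<lambda>x. c * f x) x = c * nn_cond_exp M F f x"
  using nn_cond_exp_prod[of "\<lambda>_. c" f] by auto

lemma nn_cond_exp_SUP:
  assumes [measurable]: "\<And>m. U m \<in> borel_measurable M" and inc: "\<And>m x. U m x \<le> U (Suc m) x"
  shows "AE x in M. nn_cond_exp M F (\<lambda>x. SUP m. U m x) x = (SUP m. nn_cond_exp M F (U m) x)"
proof -
  have mono: "AE x in M. nn_cond_exp M F (U m) x \<le> nn_cond_exp M F (U (Suc m)) x" for m
    by (rule nn_cond_exp_mono) (auto simp: inc)
  have "AE x in M. (SUP m. nn_cond_exp M F (U m) x) = nn_cond_exp M F (\<lambda>x. SUP m. U m x) x"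
  proof (rule nn_cond_exp_charact)
    fix A assume [measurable]: "A \<in> sets F"
    then have [measurable]: "A \<in> sets M" using subalg by (auto simp: subalgebra_def)
    have "(\<integral>\<^sup>+ x \<in> A. (SUP m. U m x) \<partial>M) = (\<integral>\<^sup>+ x. (SUP m. U m x * indicator A x) \<partial>M)"
      by (simp add: SUP_mult_right_ennreal)
    also have "\<dots> = (SUP m. \<integral>\<^sup>+ x. U m x * indicator A x \<partial>M)"
      by (rule nn_integral_monotone_convergence_SUP_AE) (auto intro!: mult_right_mono inc)
    also have "\<dots> = (SUP m. \<integral>\<^sup>+ x. indicator A x * nn_cond_exp M F (U m) x \<partial>M)"
      by (intro SUP_cong refl) (subst nn_cond_exp_intg, auto simp: mult.commute)
    also have "\<dots> = (\<integral>\<^sup>+ x. (SUP m. indicator A x * nn_cond_exp M F (U m) x) \<partial>M)"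
    proof (rule nn_integral_monotone_convergence_SUP_AE[symmetric])
      show "AE x in M. indicator A x * nn_cond_exp M F (U m) x
          \<le> indicator A x * nn_cond_exp M F (U (Suc m)) x" for m
        using mono[of m] by eventually_elim (rule mult_left_mono, auto)
    qed auto
    also have "\<dots> = (\<integral>\<^sup>+ x \<in> A. (SUP m. nn_cond_exp M F (U m) x) \<partial>M)"
      by (simp add: SUP_mult_left_ennreal mult.commute)
    finally show "(\<integral>\<^sup>+ x \<in> A. (SUP m. U m x) \<partial>M) = (\<integral>\<^sup>+ x \<in> A. (SUP m. nn_cond_exp M F (U m) x) \<partial>M)" .
  qed auto
  then show ?thesis by (auto elim: eventually_mono)
qed

lemma nn_cond_exp_sum_distrib:
  assumes [measurable]: "\<And>k. k \<in> I \<Longrightarrow> f k \<in> borel_measurable M"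
  shows "AE x in M. nn_cond_exp M F (\<lambda>x. \<Sum>k\<in>I. f k x) x = (\<Sum>k\<in>I. nn_cond_exp M F (f k) x)"
  using assms
proof (induction I rule: infinite_finite_induct)
  case (insert k I)
  have [measurable]: "f k \<in> borel_measurable M" "(\<lambda>x. \<Sum>k\<in>I. f k x) \<in> borel_measurable M"
    using insert by auto
  have "AE x in M. nn_cond_exp M F (f k) x + nn_cond_exp M F (\<lambda>x. \<Sum>k\<in>I. f k x) x =
      nn_cond_exp M F (\<lambda>x. f k x + (\<Sum>k\<in>I. f k x)) x"
    by (rule nn_cond_exp_sum) auto
  moreover have "AE x in M. nn_cond_exp M F (\<lambda>x. \<Sum>k\<in>I. f k x) x = (\<Sum>k\<in>I. nn_cond_exp M F (f k) x)"
    using insert by auto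
  ultimately show ?case by eventually_elim (use insert in auto)
qed (use nn_cond_exp_const[of 0] in simp_all)

lemma nn_cond_exp_suminf:
  assumes [measurable]: "\<And>k. f k \<in> borel_measurable M"
  shows "AE x in M. nn_cond_exp M F (\<lambda>x. \<Sum>k. f k x) x = (\<Sum>k. nn_cond_exp M F (f k) x)"
proof -
  have "AE x in M. nn_cond_exp M F (\<lambda>x. SUP n. \<Sum>k<n. f k x) x
      = (SUP n. nn_cond_exp M F (\<lambda>x. \<Sum>k<n. f k x) x)"
    by (rule nn_cond_exp_SUP) (auto intro: sum_mono2)
  moreover have "AE x in M. \<forall>n. nn_cond_exp M F (\<lambda>x. \<Sum>k<n. f k x) x = (\<Sum>k<n. nn_cond_exp M F (f k) x)"
    by (subst AE_all_countable) (auto intro: nn_cond_exp_sum_distrib)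
  ultimately show ?thesis by eventually_elim (simp add: suminf_eq_SUP)
qed

lemma nn_cond_exp_finite:
  assumes [measurable]: "f \<in> borel_measurable M" and "(\<integral>\<^sup>+x. f x \<partial>M) \<noteq> \<infinity>"
  shows "AE x in M. nn_cond_exp M F f x \<noteq> \<infinity>"
proof -
  have "(\<integral>\<^sup>+x. nn_cond_exp M F f x \<partial>M) = (\<integral>\<^sup>+x. f x \<partial>M)"
    using nn_cond_exp_intg[of "\<lambda>_. 1" f] by simp
  with assms show ?thesis by (intro nn_integral_noteq_infinite) auto
qed

lemma ennreal_real_cond_exp:
  assumes [measurable]: "f \<in> borel_measurable M" and "\<And>x. 0 \<le> f x" and "integrable M f"
  shows "AE x in M. ennreal (real_cond_exp M F f x) = nn_cond_exp M F (\<lambda>x. ennreal (f x)) x"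
proof -
  have "(\<lambda>x. ennreal (- f x)) = (\<lambda>_. 0)" using assms(2) by (auto simp: ennreal_neg)
  then have "AE x in M. nn_cond_exp M F (\<lambda>x. ennreal (- f x)) x = 0"
    using nn_cond_exp_const[of 0] by simp
  moreover have "AE x in M. nn_cond_exp M F (\<lambda>x. ennreal (f x)) x \<noteq> \<infinity>"
    using assms by (intro nn_cond_exp_finite) (auto simp: integrable_iff_bounded)
  ultimately show ?thesis
    unfolding real_cond_exp_def by eventually_elim (simp add: ennreal_enn2real_if)
qed

lemma nn_cond_exp_pos_part_eq_neg_part:
  assumes [measurable]: "f \<in> borel_measurable M" and "integrable M f"
    and "AE x in M. real_cond_exp M F f x = 0"
  shows "AE x in M. nn_cond_exp M F (\<lambda>x. ennreal (f x)) x = nn_cond_exp M F (\<lambda>x. ennreal (- f x)) x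
     \<and> nn_cond_exp M F (\<lambda>x. ennreal (- f x)) x \<noteq> \<infinity>"
proof -
  have norm_fin: "(\<integral>\<^sup>+x. ennreal (norm (f x)) \<partial>M) < \<infinity>"
    using assms by (simp add: integrable_iff_bounded)
  have "(\<integral>\<^sup>+x. ennreal (f x) \<partial>M) \<le> (\<integral>\<^sup>+x. ennreal (norm (f x)) \<partial>M)"
    "(\<integral>\<^sup>+x. ennreal (- f x) \<partial>M) \<le> (\<integral>\<^sup>+x. ennreal (norm (f x)) \<partial>M)"
    by (auto intro!: nn_integral_mono)
  then have pos: "(\<integral>\<^sup>+x. ennreal (f x) \<partial>M) \<noteq> \<infinity>" and neg: "(\<integral>\<^sup>+x. ennreal (- f x) \<partial>M) \<noteq> \<infinity>"
    using norm_fin by (auto simp: top_unique)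
  have "AE x in M. nn_cond_exp M F (\<lambda>x. ennreal (f x)) x \<noteq> \<infinity>"
    using pos by (intro nn_cond_exp_finite) auto
  moreover have "AE x in M. nn_cond_exp M F (\<lambda>x. ennreal (- f x)) x \<noteq> \<infinity>"
    using neg by (intro nn_cond_exp_finite) auto
  ultimately have "AE x in M. nn_cond_exp M F (\<lambda>x. ennreal (f x)) x \<noteq> \<infinity>
      \<and> nn_cond_exp M F (\<lambda>x. ennreal (- f x)) x \<noteq> \<infinity>"
    by eventually_elim simp
  with assms(3) show ?thesis
  proof eventually_elim
    case (elim x)
    let ?a = "nn_cond_exp M F (\<lambda>x. ennreal (f x)) x" and ?b = "nn_cond_exp M F (\<lambda>x. ennreal (- f x)) x"
    have "enn2real ?a = enn2real ?b" using elim(1) unfolding real_cond_exp_def by simp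
    then have "ennreal (enn2real ?a) = ennreal (enn2real ?b)" by simp
    with elim(2) show ?case by (simp add: ennreal_enn2real_if)
  qed
qed

lemma cond_var_eq_nn_cond_exp_square:
  assumes [measurable]: "f \<in> borel_measurable M" and "AE x in M. real_cond_exp M F f x = 0"
  shows "AE x in M. cond_var M F f x = nn_cond_exp M F (\<lambda>x. ennreal ((f x)^2)) x"
  unfolding cond_var_def by (rule nn_cond_exp_cong) (use assms in \<open>auto elim!: eventually_mono\<close>)

lemma nn_cond_exp_comp_mult_from_indicator:
  fixes R Q :: "'a \<Rightarrow> ennreal" and e :: "'a \<Rightarrow> real"
  assumes [measurable]: "e \<in> borel_measurable M" "R \<in> borel_measurable M"
    and indicator: "\<And>A. A \<in> sets borel \<Longrightarrow> AE x in M.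
      nn_cond_exp M F (\<lambda>x. indicator A (e x) * R x) x = nn_cond_exp M F (\<lambda>x. indicator A (e x)) x * Q x"
    and u[measurable]: "u \<in> borel_measurable borel"
  shows "AE x in M. nn_cond_exp M F (\<lambda>x. u (e x) * R x) x = nn_cond_exp M F (\<lambda>x. u (e x)) x * Q x"
  using u
proof (induction u rule: borel_measurable_induct)
  case (cong f g)
  then have "f = g" by auto
  with cong show ?case by simp
next
  case (set A)
  then show ?case by (rule indicator)
next
  case (mult u c)
  note [measurable] = mult(2)
  have "AE x in M. nn_cond_exp M F (\<lambda>x. c * (u (e x) * R x)) x = c * nn_cond_exp M F (\<lambda>x. u (e x) * R x) x"
    "AE x in M. nn_cond_exp M F (\<lambda>x. c * u (e x)) x = c * nn_cond_exp M F (\<lambda>x. u (e x)) x"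
    by (rule nn_cond_exp_cmult; simp)+
  with mult(4) show ?case by eventually_elim (simp add: mult.assoc)
next
  case (add u v)
  have [measurable]: "u \<in> borel_measurable borel" "v \<in> borel_measurable borel"
    using add by auto
  have "AE x in M. nn_cond_exp M F (\<lambda>x. v (e x) * R x + u (e x) * R x) x
      = nn_cond_exp M F (\<lambda>x. v (e x) * R x) x + nn_cond_exp M F (\<lambda>x. u (e x) * R x) x"
    using nn_cond_exp_sum[of "\<lambda>x. v (e x) * R x" "\<lambda>x. u (e x) * R x"] by (auto elim!: eventually_mono)
  moreover have "AE x in M. nn_cond_exp M F (\<lambda>x. v (e x) + u (e x)) x
      = nn_cond_exp M F (\<lambda>x. v (e x)) x + nn_cond_exp M F (\<lambda>x. u (e x)) x"
    using nn_cond_exp_sum[of "\<lambda>x. v (e x)" "\<lambda>x. u (e x)"] by (auto elim!: eventually_mono)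
  moreover have "AE x in M. nn_cond_exp M F (\<lambda>x. u (e x) * R x) x = nn_cond_exp M F (\<lambda>x. u (e x)) x * Q x"
    "AE x in M. nn_cond_exp M F (\<lambda>x. v (e x) * R x) x = nn_cond_exp M F (\<lambda>x. v (e x)) x * Q x"
    using add by simp_all
  ultimately show ?case by eventually_elim (simp add: distrib_right)
next
  case (seq U)
  have [measurable]: "U m \<in> borel_measurable borel" for m using seq by auto
  have inc: "U m y \<le> U (Suc m) y" for m y using seq by (auto simp: incseq_def le_fun_def)
  have "AE x in M. nn_cond_exp M F (\<lambda>x. SUP m. U m (e x) * R x) x
      = (SUP m. nn_cond_exp M F (\<lambda>x. U m (e x) * R x) x)"
    by (rule nn_cond_exp_SUP) (auto intro!: mult_right_mono inc)
  moreover have "AE x in M. nn_cond_exp M F (\<lambda>x. SUP m. U m (e x)) x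
      = (SUP m. nn_cond_exp M F (\<lambda>x. U m (e x)) x)"
    by (rule nn_cond_exp_SUP) (auto intro!: inc)
  moreover have "AE x in M. \<forall>m. nn_cond_exp M F (\<lambda>x. U m (e x) * R x) x
      = nn_cond_exp M F (\<lambda>x. U m (e x)) x * Q x"
    by (subst AE_all_countable) (use seq in auto)
  ultimately show ?case
    by eventually_elim (simp add: SUP_mult_right_ennreal image_comp)
qed

lemma nn_cond_exp_exp_eq_one_add_remainder:
  assumes [measurable]: "e \<in> borel_measurable M" and "integrable M e"
    and "AE x in M. real_cond_exp M F e x = 0"
  shows "AE x in M. nn_cond_exp M F (\<lambda>x. ennreal (exp (v * e x))) x
    = 1 + nn_cond_exp M F (\<lambda>x. ennreal (exp (v * e x) - 1 - v * e x)) x"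
proof -
  let ?p = "\<lambda>x. ennreal (v * e x)" and ?q = "\<lambda>x. ennreal (- (v * e x))"
    and ?r = "\<lambda>x. ennreal (exp (v * e x) - 1 - v * e x)" and ?E = "\<lambda>x. ennreal (exp (v * e x))"
  have "AE x in M. real_cond_exp M F (\<lambda>x. v * e x) x = 0"
    using real_cond_exp_cmult[OF \<open>integrable M e\<close>, of v] assms(3) by eventually_elim simp
  then have pq: "AE x in M. nn_cond_exp M F ?p x = nn_cond_exp M F ?q x \<and> nn_cond_exp M F ?q x \<noteq> \<infinity>"
    using \<open>integrable M e\<close> by (intro nn_cond_exp_pos_part_eq_neg_part) auto
  have split: "(\<lambda>x. ?E x + ?q x) = (\<lambda>x. (1 + ?p x) + ?r x)"
    by (simp add: ennreal_exp_add_neg_part)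
  have "AE x in M. nn_cond_exp M F (\<lambda>x. (1 + ?p x) + ?r x) x
      = nn_cond_exp M F ?E x + nn_cond_exp M F ?q x"
    using nn_cond_exp_sum[of ?E ?q] unfolding split by (auto elim!: eventually_mono)
  moreover have "AE x in M. nn_cond_exp M F (\<lambda>x. (1 + ?p x) + ?r x) x
      = nn_cond_exp M F (\<lambda>x. 1 + ?p x) x + nn_cond_exp M F ?r x"
    using nn_cond_exp_sum[of "\<lambda>x. 1 + ?p x" ?r] by (auto elim!: eventually_mono)
  moreover have "AE x in M. nn_cond_exp M F (\<lambda>x. 1) x + nn_cond_exp M F ?p x
      = nn_cond_exp M F (\<lambda>x. 1 + ?p x) x"
    by (rule nn_cond_exp_sum) auto
  then have "AE x in M. nn_cond_exp M F (\<lambda>x. 1 + ?p x) x = 1 + nn_cond_exp M F ?p x"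
    using nn_cond_exp_const[of 1] by eventually_elim simp
  ultimately show ?thesis
    using pq
  proof eventually_elim
    case (elim x)
    then have "nn_cond_exp M F ?q x + nn_cond_exp M F ?E x
        = nn_cond_exp M F ?q x + (1 + nn_cond_exp M F ?r x)"
      by (simp add: ac_simps)
    with elim(4) show ?case by (simp add: ennreal_add_left_cancel)
  qed
qed

lemma nn_cond_exp_exp_remainder_le:
  assumes [measurable]: "e \<in> borel_measurable M"
  shows "AE x in M. nn_cond_exp M F (\<lambda>x. ennreal (exp (v * e x) - 1 - v * e x)) x
    \<le> (\<Sum>k. ennreal (\<bar>v\<bar>^(k+2) / fact (k+2)) * nn_cond_exp M F (\<lambda>x. ennreal (\<bar>e x\<bar>^(k+2))) x)"
proof -
  define c where "c k = ennreal (\<bar>v\<bar>^(k+2) / fact (k+2))" for k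
  have "ennreal (\<bar>v * y\<bar>^(k+2) / fact (k+2)) = c k * ennreal (\<bar>y\<bar>^(k+2))" for y k
    by (simp add: c_def ennreal_mult[symmetric] abs_mult power_mult_distrib)
  then have "ennreal (exp (v * e x) - 1 - v * e x) \<le> (\<Sum>k. c k * ennreal (\<bar>e x\<bar>^(k+2)))" for x
    using ennreal_exp_minus_one_minus_le[of "v * e x"] by simp
  then have "AE x in M. nn_cond_exp M F (\<lambda>x. ennreal (exp (v * e x) - 1 - v * e x)) x
      \<le> nn_cond_exp M F (\<lambda>x. \<Sum>k. c k * ennreal (\<bar>e x\<bar>^(k+2))) x"
    by (intro nn_cond_exp_mono) auto
  moreover have "AE x in M. nn_cond_exp M F (\<lambda>x. \<Sum>k. c k * ennreal (\<bar>e x\<bar>^(k+2))) x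
      = (\<Sum>k. nn_cond_exp M F (\<lambda>x. c k * ennreal (\<bar>e x\<bar>^(k+2))) x)"
    by (rule nn_cond_exp_suminf) auto
  moreover have "AE x in M. \<forall>k. nn_cond_exp M F (\<lambda>x. c k * ennreal (\<bar>e x\<bar>^(k+2))) x
      = c k * nn_cond_exp M F (\<lambda>x. ennreal (\<bar>e x\<bar>^(k+2))) x"
    by (subst AE_all_countable) (auto intro!: nn_cond_exp_cmult)
  ultimately show ?thesis unfolding c_def by eventually_elim simp
qed

lemma nn_cond_exp_exp_le_bernstein_mgf:
  fixes e :: "'a \<Rightarrow> real" and v \<eta> s :: real
  assumes [measurable]: "e \<in> borel_measurable M" and "integrable M e"
    and mean0: "AE x in M. real_cond_exp M F e x = 0"
    and var: "AE x in M. cond_var M F e x \<le> ennreal s"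
    and bernstein: "\<And>k. k \<ge> 3 \<Longrightarrow> AE x in M. nn_cond_exp M F (\<lambda>x. ennreal (\<bar>e x\<bar>^k)) x
        \<le> ennreal (1/2 * fact k * \<eta>^(k-2)) * cond_var M F e x"
    and "\<eta> \<ge> 0"
  shows "AE x in M. nn_cond_exp M F (\<lambda>x. ennreal (exp (v * e x))) x \<le> bernstein_mgf \<eta> s v"
proof -
  have moments: "AE x in M. \<forall>k. nn_cond_exp M F (\<lambda>x. ennreal (\<bar>e x\<bar>^(k+2))) x
      \<le> ennreal (1/2 * fact (k+2) * \<eta>^k) * cond_var M F e x"
  proof (subst AE_all_countable, intro allI)
    fix k :: nat
    show "AE x in M. nn_cond_exp M F (\<lambda>x. ennreal (\<bar>e x\<bar>^(k+2))) x
        \<le> ennreal (1/2 * fact (k+2) * \<eta>^k) * cond_var M F e x"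
    proof (cases k)
      case 0
      from cond_var_eq_nn_cond_exp_square[OF assms(1) mean0] show ?thesis
        by eventually_elim (simp add: 0 power2_eq_square)
    next
      case (Suc m)
      then show ?thesis using bernstein[of "k+2"] by simp
    qed
  qed
  have coeff: "ennreal (\<bar>v\<bar>^(k+2) / fact (k+2)) * ennreal (1/2 * fact (k+2) * \<eta>^k)
      = ennreal (\<bar>v\<bar>^(k+2) * \<eta>^k / 2)" for k
    using \<open>\<eta> \<ge> 0\<close> by (simp add: ennreal_mult[symmetric])
  from nn_cond_exp_exp_eq_one_add_remainder[OF assms(1-3), where v=v]
    nn_cond_exp_exp_remainder_le[OF assms(1), where v=v]
    moments var
  show ?thesis
  proof eventually_elim
    case (elim x)
    let ?V = "cond_var M F e x"
    have "nn_cond_exp M F (\<lambda>x. ennreal (exp (v * e x))) x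
        \<le> 1 + (\<Sum>k. ennreal (\<bar>v\<bar>^(k+2) / fact (k+2)) * nn_cond_exp M F (\<lambda>x. ennreal (\<bar>e x\<bar>^(k+2))) x)"
      using elim(1,2) by (simp add: add_left_mono)
    also have "\<dots> \<le> 1 + (\<Sum>k. ennreal (\<bar>v\<bar>^(k+2) / fact (k+2)) * (ennreal (1/2 * fact (k+2) * \<eta>^k) * ?V))"
      by (intro add_left_mono suminf_le summableI mult_left_mono elim(3)[rule_format]) auto
    also have "\<dots> = 1 + (\<Sum>k. ennreal (\<bar>v\<bar>^(k+2) * \<eta>^k / 2)) * ?V"
      by (simp only: mult.assoc[symmetric] coeff ennreal_suminf_multc)
    also have "\<dots> \<le> bernstein_mgf \<eta> s v"
      unfolding bernstein_mgf_def using elim(4) by (intro add_left_mono mult_left_mono) auto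
    finally show ?case .
  qed
qed

end

context finite_measure_subalgebra
begin

lemma ennreal_real_cond_exp_unit_interval:
  assumes [measurable]: "f \<in> borel_measurable M" and "\<And>x. 0 \<le> f x" "\<And>x. f x \<le> 1"
  shows "AE x in M. ennreal (real_cond_exp M F f x) = nn_cond_exp M F (\<lambda>x. ennreal (f x)) x
    \<and> 0 \<le> real_cond_exp M F f x"
proof -
  have "integrable M f"
    using assms by (intro integrable_const_bound[where B=1] AE_I2) (simp_all add: abs_le_iff)
  then have "AE x in M. ennreal (real_cond_exp M F f x) = nn_cond_exp M F (\<lambda>x. ennreal (f x)) x"
    "AE x in M. 0 \<le> real_cond_exp M F f x"
    using assms by (auto intro!: ennreal_real_cond_exp real_cond_exp_pos)
  then show ?thesis by eventually_elim simp
qed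

lemma nn_cond_exp_prod_indicator:
  fixes e :: "'i \<Rightarrow> 'a \<Rightarrow> real"
  assumes "finite I" and [measurable]: "\<And>i. i \<in> I \<Longrightarrow> e i \<in> borel_measurable M"
    and "cond_indep_vars M F e I"
    and [measurable]: "\<And>i. i \<in> I \<Longrightarrow> B i \<in> sets borel"
  shows "AE x in M. nn_cond_exp M F (\<lambda>x. \<Prod>i\<in>I. indicator (B i) (e i x)) x
         = (\<Prod>i\<in>I. nn_cond_exp M F (\<lambda>x. indicator (B i) (e i x)) x)"
proof -
  define f where "f i x = (indicator (B i) (e i x) :: real)" for i x
  have f_meas[measurable]: "f i \<in> borel_measurable M" if "i \<in> I" for i
    using that unfolding f_def by measurable
  have f_bounds: "0 \<le> f i x" "f i x \<le> 1" for i x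
    by (auto simp: f_def)
  have "AE x in M. ennreal (real_cond_exp M F (\<lambda>x. \<Prod>i\<in>I. f i x) x)
      = nn_cond_exp M F (\<lambda>x. ennreal (\<Prod>i\<in>I. f i x)) x"
    using ennreal_real_cond_exp_unit_interval[of "\<lambda>x. \<Prod>i\<in>I. f i x"] f_bounds
    by (auto intro!: prod_nonneg prod_le_1 elim!: eventually_mono)
  moreover have "AE x in M. \<forall>i\<in>I. ennreal (real_cond_exp M F (f i) x) = nn_cond_exp M F (\<lambda>x. ennreal (f i x)) x
      \<and> 0 \<le> real_cond_exp M F (f i) x"
    by (subst AE_finite_all[OF \<open>finite I\<close>], intro ballI ennreal_real_cond_exp_unit_interval)
      (auto intro: f_meas f_bounds)
  moreover have "AE x in M. real_cond_exp M F (\<lambda>x. \<Prod>i\<in>I. f i x) x = (\<Prod>i\<in>I. real_cond_exp M F (f i) x)"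
    using assms(3,4) unfolding cond_indep_vars_def f_def by auto
  ultimately have "AE x in M. nn_cond_exp M F (\<lambda>x. ennreal (\<Prod>i\<in>I. f i x)) x
      = (\<Prod>i\<in>I. nn_cond_exp M F (\<lambda>x. ennreal (f i x)) x)"
    by eventually_elim (auto simp: prod_ennreal[symmetric] intro!: prod.cong)
  moreover have "ennreal (\<Prod>i\<in>I. f i x) = (\<Prod>i\<in>I. indicator (B i) (e i x))" for x
    by (simp add: f_def prod_ennreal[symmetric] ennreal_indicator)
  moreover have "ennreal (f i x) = indicator (B i) (e i x)" for i x
    by (simp add: f_def ennreal_indicator)
  ultimately show ?thesis by simp
qed

lemma nn_cond_exp_prod_comp:
  fixes e :: "'i \<Rightarrow> 'a \<Rightarrow> real" and h :: "'i \<Rightarrow> real \<Rightarrow> ennreal"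
  assumes "finite I" and e: "\<And>i. i \<in> I \<Longrightarrow> e i \<in> borel_measurable M"
    and indep: "cond_indep_vars M F e I"
    and h: "\<And>i. i \<in> I \<Longrightarrow> h i \<in> borel_measurable borel"
  shows "AE x in M. nn_cond_exp M F (\<lambda>x. \<Prod>i\<in>I. h i (e i x)) x
         = (\<Prod>i\<in>I. nn_cond_exp M F (\<lambda>x. h i (e i x)) x)"
proof -
  define P where "P h \<longleftrightarrow> (AE x in M. nn_cond_exp M F (\<lambda>x. \<Prod>i\<in>I. h i (e i x)) x
         = (\<Prod>i\<in>I. nn_cond_exp M F (\<lambda>x. h i (e i x)) x))" for h :: "'i \<Rightarrow> real \<Rightarrow> ennreal"
  txt \<open>Replace the indicators by general functions one coordinate at a time.\<close>
  have P: "P h" if "J \<subseteq> I" "\<forall>i\<in>I. h i \<in> borel_measurable borel"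
    "\<forall>i\<in>I - J. \<exists>B\<in>sets borel. h i = indicator B" for J h
  proof -
    have "finite J" using that(1) \<open>finite I\<close> by (rule finite_subset)
    then show ?thesis using that
    proof (induction J arbitrary: h rule: finite_induct)
      case empty
      then obtain B where B: "\<And>i. i \<in> I \<Longrightarrow> B i \<in> sets borel \<and> h i = indicator (B i)"
        by (metis Diff_empty)
      with nn_cond_exp_prod_indicator[OF \<open>finite I\<close> e indep, of B] show "P h"
        unfolding P_def by (simp cong: prod.cong)
    next
      case (insert j J)
      have j: "j \<in> I" and h_meas[measurable]: "\<And>i. i \<in> I \<Longrightarrow> h i \<in> borel_measurable borel"
        using insert by auto
      define R where "R x = (\<Prod>i\<in>I-{j}. h i (e i x))" for x
      define Q where "Q x = (\<Prod>i\<in>I-{j}. nn_cond_exp M F (\<lambda>x. h i (e i x)) x)" for x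
      have [measurable]: "R \<in> borel_measurable M" "e j \<in> borel_measurable M"
        unfolding R_def using e j measurable_compose[OF e h_meas] by auto
      have split: "(\<Prod>i\<in>I. (h(j:=u)) i (e i x)) = u (e j x) * R x"
        "(\<Prod>i\<in>I. nn_cond_exp M F (\<lambda>x. (h(j:=u)) i (e i x)) x) = nn_cond_exp M F (\<lambda>x. u (e j x)) x * Q x"
        for u x
        unfolding R_def Q_def prod.remove[OF \<open>finite I\<close> j] by (auto intro!: prod.cong)
      have "AE x in M. nn_cond_exp M F (\<lambda>x. h j (e j x) * R x) x = nn_cond_exp M F (\<lambda>x. h j (e j x)) x * Q x"
      proof (rule nn_cond_exp_comp_mult_from_indicator)
        fix A :: "real set" assume "A \<in> sets borel"
        then have "P (h(j:=indicator A))" using insert by (intro insert.IH) auto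
        then show "AE x in M. nn_cond_exp M F (\<lambda>x. indicator A (e j x) * R x) x =
            nn_cond_exp M F (\<lambda>x. indicator A (e j x)) x * Q x"
          unfolding P_def split .
      qed (use j in auto)
      then have "P (h(j := h j))" unfolding P_def split .
      then show "P h" by simp
    qed
  qed
  from P[of I h] h show ?thesis unfolding P_def by simp
qed

lemma nn_cond_exp_prod_exp_le:
  fixes e :: "'i \<Rightarrow> 'a \<Rightarrow> real" and B :: "real \<Rightarrow> ennreal"
  assumes "finite I" and e: "\<And>i. i \<in> I \<Longrightarrow> e i \<in> borel_measurable M"
    and indep: "cond_indep_vars M F e I"
    and mgf: "\<And>i v. i \<in> I \<Longrightarrow> AE x in M. nn_cond_exp M F (\<lambda>x. ennreal (exp (v * e i x))) x \<le> B v"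
  shows "AE x in M. nn_cond_exp M F (\<lambda>x. \<Prod>i\<in>I. ennreal (exp (p i * e i x))) x \<le> (\<Prod>i\<in>I. B (p i))"
proof -
  have "AE x in M. nn_cond_exp M F (\<lambda>x. \<Prod>i\<in>I. (\<lambda>y. ennreal (exp (p i * y))) (e i x)) x
      = (\<Prod>i\<in>I. nn_cond_exp M F (\<lambda>x. (\<lambda>y. ennreal (exp (p i * y))) (e i x)) x)"
    by (rule nn_cond_exp_prod_comp[OF \<open>finite I\<close> e indep]) auto
  moreover have "AE x in M. \<forall>i\<in>I. nn_cond_exp M F (\<lambda>x. ennreal (exp (p i * e i x))) x \<le> B (p i)"
    using \<open>finite I\<close> mgf by (subst AE_finite_all) auto
  ultimately show ?thesis by eventually_elim (auto intro!: prod_mono_ennreal)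
qed

lemma nn_integral_prod_exp_finite_range_le:
  fixes e s :: "'i \<Rightarrow> 'a \<Rightarrow> real" and w :: "'i \<Rightarrow> 'a \<Rightarrow> ennreal" and B :: "real \<Rightarrow> ennreal"
  assumes "finite I" and e: "\<And>i. i \<in> I \<Longrightarrow> e i \<in> borel_measurable M"
    and indep: "cond_indep_vars M F e I"
    and mgf: "\<And>i v. i \<in> I \<Longrightarrow> AE x in M. nn_cond_exp M F (\<lambda>x. ennreal (exp (v * e i x))) x \<le> B v"
    and s: "\<And>i. i \<in> I \<Longrightarrow> s i \<in> borel_measurable F"
    and w: "\<And>i. i \<in> I \<Longrightarrow> w i \<in> borel_measurable F"
    and "finite V" and s_V: "\<And>i x. i \<in> I \<Longrightarrow> x \<in> space M \<Longrightarrow> s i x \<in> V"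
  shows "(\<integral>\<^sup>+x. (\<Prod>i\<in>I. w i x * ennreal (exp (s i x * e i x))) \<partial>M)
    \<le> (\<integral>\<^sup>+x. (\<Prod>i\<in>I. w i x * B (s i x)) \<partial>M)"
proof -
  let ?P = "PiE I (\<lambda>_. V)"
  define \<Delta> where "\<Delta> p x = (\<Prod>i\<in>I. if s i x = p i then w i x else 0)" for p :: "'i \<Rightarrow> real" and x
  define E where "E p x = (\<Prod>i\<in>I. ennreal (exp (p i * e i x)))" for p :: "'i \<Rightarrow> real" and x
  have \<Delta>_F: "\<Delta> p \<in> borel_measurable F" for p
    unfolding \<Delta>_def
  proof (rule borel_measurable_prod_ennreal)
    fix i assume "i \<in> I"
    note [measurable] = s[OF this] w[OF this]
    show "(\<lambda>x. if s i x = p i then w i x else 0) \<in> borel_measurable F" by measurable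
  qed
  then have \<Delta>_M: "\<Delta> p \<in> borel_measurable M" for p
    by (rule measurable_from_subalg[OF subalg])
  have E_M: "E p \<in> borel_measurable M" for p
    unfolding E_def
  proof (rule borel_measurable_prod_ennreal)
    fix i assume "i \<in> I"
    note [measurable] = e[OF this]
    show "(\<lambda>x. ennreal (exp (p i * e i x))) \<in> borel_measurable M" by measurable
  qed
  have "(\<integral>\<^sup>+x. (\<Prod>i\<in>I. w i x * ennreal (exp (s i x * e i x))) \<partial>M)
      = (\<integral>\<^sup>+x. (\<Sum>p\<in>?P. \<Delta> p x * E p x) \<partial>M)"
  proof (rule nn_integral_cong)
    fix x assume "x \<in> space M"
    then show "(\<Prod>i\<in>I. w i x * ennreal (exp (s i x * e i x))) = (\<Sum>p\<in>?P. \<Delta> p x * E p x)"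
      unfolding \<Delta>_def E_def using \<open>finite I\<close> \<open>finite V\<close> s_V
      by (intro prod_mult_eq_sum_PiE_delta[where g="\<lambda>i v. ennreal (exp (v * e i x))" and s="\<lambda>i. s i x"])
  qed
  also have "\<dots> = (\<Sum>p\<in>?P. \<integral>\<^sup>+x. \<Delta> p x * E p x \<partial>M)"
    using \<Delta>_M E_M by (intro nn_integral_sum) auto
  also have "\<dots> = (\<Sum>p\<in>?P. \<integral>\<^sup>+x. \<Delta> p x * nn_cond_exp M F (E p) x \<partial>M)"
    using \<Delta>_F E_M by (intro sum.cong refl nn_cond_exp_intg[symmetric])
  also have "\<dots> \<le> (\<Sum>p\<in>?P. \<integral>\<^sup>+x. \<Delta> p x * (\<Prod>i\<in>I. B (p i)) \<partial>M)"
  proof (intro sum_mono nn_integral_mono_AE)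
    fix p
    have "AE x in M. nn_cond_exp M F (E p) x \<le> (\<Prod>i\<in>I. B (p i))"
      unfolding E_def using \<open>finite I\<close> e indep mgf by (rule nn_cond_exp_prod_exp_le)
    then show "AE x in M. \<Delta> p x * nn_cond_exp M F (E p) x \<le> \<Delta> p x * (\<Prod>i\<in>I. B (p i))"
      by eventually_elim (rule mult_left_mono, auto)
  qed
  also have "\<dots> = (\<integral>\<^sup>+x. (\<Sum>p\<in>?P. \<Delta> p x * (\<Prod>i\<in>I. B (p i))) \<partial>M)"
    using \<Delta>_M by (intro nn_integral_sum[symmetric]) auto
  also have "\<dots> = (\<integral>\<^sup>+x. (\<Prod>i\<in>I. w i x * B (s i x)) \<partial>M)"
  proof (rule nn_integral_cong)
    fix x assume "x \<in> space M"
    then show "(\<Sum>p\<in>?P. \<Delta> p x * (\<Prod>i\<in>I. B (p i))) = (\<Prod>i\<in>I. w i x * B (s i x))"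
      unfolding \<Delta>_def using \<open>finite I\<close> \<open>finite V\<close> s_V
      by (intro prod_mult_eq_sum_PiE_delta[symmetric, where g="\<lambda>i. B" and s="\<lambda>i. s i x"])
  qed
  finally show ?thesis .
qed

end

section \<open>The exponential inequality\<close>

locale prob_space_subalgebra = prob_space M + finite_measure_subalgebra M F for M F :: "'a measure"

context prob_space_subalgebra
begin

lemma nn_integral_exp_sum_le_1:
  fixes e t a :: "'i \<Rightarrow> 'a \<Rightarrow> real" and B :: "real \<Rightarrow> ennreal" and T :: real
  assumes "finite I" and e: "\<And>i. i \<in> I \<Longrightarrow> e i \<in> borel_measurable M"
    and indep: "cond_indep_vars M F e I"
    and mgf: "\<And>i v. i \<in> I \<Longrightarrow> AE x in M. nn_cond_exp M F (\<lambda>x. ennreal (exp (v * e i x))) x \<le> B v"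
    and [measurable]: "\<And>i. i \<in> I \<Longrightarrow> t i \<in> borel_measurable F"
    and [measurable]: "\<And>i. i \<in> I \<Longrightarrow> a i \<in> borel_measurable F"
    and t_bound: "\<And>i x. i \<in> I \<Longrightarrow> x \<in> space M \<Longrightarrow> \<bar>t i x\<bar> \<le> T"
    and compensated: "\<And>i x v. i \<in> I \<Longrightarrow> x \<in> space M \<Longrightarrow> \<bar>v\<bar> \<le> \<bar>t i x\<bar> \<Longrightarrow>
      ennreal (exp (- a i x)) * B v \<le> 1"
  shows "(\<integral>\<^sup>+x. ennreal (exp (\<Sum>i\<in>I. t i x * e i x - a i x)) \<partial>M) \<le> 1"
proof -
  txt \<open>Rounding the coefficients to a finite dyadic grid lets them be pulled out of the
    conditional expectation; Fatou's lemma removes the rounding.\<close>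
  define f where "f m x = ennreal (exp (\<Sum>i\<in>I. dyadic_trunc m (t i x) * e i x - a i x))" for m x
  have f_M: "f m \<in> borel_measurable M" for m
  proof -
    have [measurable]: "i \<in> I \<Longrightarrow> t i \<in> borel_measurable M" "i \<in> I \<Longrightarrow> a i \<in> borel_measurable M"
      "i \<in> I \<Longrightarrow> e i \<in> borel_measurable M" for i
      using e by (auto intro: measurable_from_subalg[OF subalg])
    show ?thesis unfolding f_def by measurable
  qed
  have f_le_1: "(\<integral>\<^sup>+x. f m x \<partial>M) \<le> 1" for m
  proof -
    have "(\<integral>\<^sup>+x. f m x \<partial>M)
        = (\<integral>\<^sup>+x. (\<Prod>i\<in>I. ennreal (exp (- a i x)) * ennreal (exp (dyadic_trunc m (t i x) * e i x))) \<partial>M)"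
      unfolding f_def using \<open>finite I\<close>
      by (intro nn_integral_cong) (simp add: exp_sum prod_ennreal ennreal_mult[symmetric] exp_add[symmetric])
    also have "\<dots> \<le> (\<integral>\<^sup>+x. (\<Prod>i\<in>I. ennreal (exp (- a i x)) * B (dyadic_trunc m (t i x))) \<partial>M)"
    proof (rule nn_integral_prod_exp_finite_range_le[OF \<open>finite I\<close> e indep mgf])
      show "finite ((\<lambda>k. of_int k / 2^m) ` {- \<lfloor>T * 2^m\<rfloor> .. \<lfloor>T * 2^m\<rfloor>} :: real set)"
        by simp
    qed (auto intro: dyadic_trunc_in_grid t_bound)
    also have "\<dots> \<le> (\<integral>\<^sup>+x. (\<Prod>i\<in>I. 1) \<partial>M)"
      using compensated abs_dyadic_trunc_le by (intro nn_integral_mono prod_mono_ennreal) auto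
    finally show ?thesis by (simp add: emeasure_space_1)
  qed
  have lim: "(\<lambda>m. f m x) \<longlonglongrightarrow> ennreal (exp (\<Sum>i\<in>I. t i x * e i x - a i x))" for x
    unfolding f_def
    by (intro tendsto_ennrealI tendsto_exp tendsto_sum tendsto_diff tendsto_mult dyadic_trunc_tendsto tendsto_const)
  have "(\<integral>\<^sup>+x. ennreal (exp (\<Sum>i\<in>I. t i x * e i x - a i x)) \<partial>M) = (\<integral>\<^sup>+x. liminf (\<lambda>m. f m x) \<partial>M)"
    by (intro nn_integral_cong) (simp add: lim_imp_Liminf[OF trivial_limit_sequentially lim])
  also have "\<dots> \<le> liminf (\<lambda>m. \<integral>\<^sup>+x. f m x \<partial>M)"
    using f_M by (rule nn_integral_liminf)
  also have "\<dots> \<le> limsup (\<lambda>m. \<integral>\<^sup>+x. f m x \<partial>M)"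
    by (rule Liminf_le_Limsup) simp
  also have "\<dots> \<le> 1"
    using f_le_1 by (intro Limsup_bounded) simp
  finally show ?thesis .
qed

lemma nn_integral_exp_bernstein_sum_le_1:
  fixes e Y :: "'i \<Rightarrow> 'a \<Rightarrow> real" and A \<eta> K s \<gamma> :: real
  assumes "finite I" and e: "\<And>i. i \<in> I \<Longrightarrow> e i \<in> borel_measurable M"
    and indep: "cond_indep_vars M F e I"
    and mgf: "\<And>i v. i \<in> I \<Longrightarrow>
      AE x in M. nn_cond_exp M F (\<lambda>x. ennreal (exp (v * e i x))) x \<le> bernstein_mgf \<eta> s v"
    and "A > 0" "\<eta> > 0" "K > 0" "s \<ge> 0" and \<gamma>: "\<gamma> = A * s / 2 + K * \<eta>"
    and Y: "\<And>i. i \<in> I \<Longrightarrow> Y i \<in> borel_measurable F"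
    and Y_bound: "\<And>i x. i \<in> I \<Longrightarrow> x \<in> space M \<Longrightarrow> \<bar>Y i x\<bar> \<le> K"
  shows "(\<integral>\<^sup>+x. ennreal (exp (\<Sum>i\<in>I. Y i x / \<gamma> * e i x - (Y i x)^2 / (A * \<gamma>))) \<partial>M) \<le> 1"
proof (rule nn_integral_exp_sum_le_1[OF \<open>finite I\<close> e indep mgf])
  have "\<gamma> > 0" using assms by (simp add: add_nonneg_pos)
  show "\<bar>Y i x / \<gamma>\<bar> \<le> K / \<gamma>" if "i \<in> I" "x \<in> space M" for i x
    using Y_bound[OF that] \<open>\<gamma> > 0\<close> by (simp add: abs_divide divide_right_mono)
  show "ennreal (exp (- ((Y i x)^2 / (A * \<gamma>)))) * bernstein_mgf \<eta> s v \<le> 1"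
    if "i \<in> I" "x \<in> space M" "\<bar>v\<bar> \<le> \<bar>Y i x / \<gamma>\<bar>" for i x v
    using that \<open>\<gamma> > 0\<close>
    by (intro exp_neg_mult_bernstein_mgf_le_1[OF assms(5-9) Y_bound]) (auto simp: abs_divide)
qed (use Y in auto)

lemma nn_integral_exp_penalized_le:
  fixes \<epsilon> Y :: "nat \<Rightarrow> 'a \<Rightarrow> real" and n :: nat and \<sigma> \<eta> K A l :: real
  defines "\<gamma> \<equiv> A * \<sigma>^2 / 2 + K * \<eta>"
  assumes "n > 0" and eps_meas: "\<And>i. i \<in> {1..n} \<Longrightarrow> \<epsilon> i \<in> borel_measurable M"
    and indep: "cond_indep_vars M F \<epsilon> {1..n}"
    and mgf: "\<And>i v. i \<in> {1..n} \<Longrightarrow>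
      AE x in M. nn_cond_exp M F (\<lambda>x. ennreal (exp (v * \<epsilon> i x))) x \<le> bernstein_mgf \<eta> (\<sigma>^2) v"
    and "A > 0" "\<eta> > 0" "K > 0"
    and Y_meas: "\<And>i. i \<in> {1..n} \<Longrightarrow> Y i \<in> borel_measurable F"
    and Y_bd: "\<And>i x. i \<in> {1..n} \<Longrightarrow> x \<in> space M \<Longrightarrow> \<bar>Y i x\<bar> \<le> K"
  shows "(\<integral>\<^sup>+x. ennreal (exp (real n / \<gamma> * ((1 / real n) * (\<Sum>i=1..n. \<epsilon> i x * Y i x) - \<gamma> / real n * l
      - 1 / (A * real n) * (\<Sum>i=1..n. (Y i x)^2)))) \<partial>M) \<le> ennreal (exp (- l))"
proof -
  have "\<gamma> > 0" using \<open>A > 0\<close> \<open>\<eta> > 0\<close> \<open>K > 0\<close> by (simp add: \<gamma>_def add_nonneg_pos)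
  let ?B = "\<lambda>x. \<Sum>i\<in>{1..n}. Y i x / \<gamma> * \<epsilon> i x - (Y i x)^2 / (A * \<gamma>)"
  have [measurable]: "?B \<in> borel_measurable M"
  proof (rule borel_measurable_sum)
    fix i assume "i \<in> {1..n}"
    note [measurable] = eps_meas[OF this] measurable_from_subalg[OF subalg Y_meas[OF this]]
    show "(\<lambda>x. Y i x / \<gamma> * \<epsilon> i x - (Y i x)^2 / (A * \<gamma>)) \<in> borel_measurable M" by measurable
  qed
  have "real n / \<gamma> * ((1 / real n) * (\<Sum>i=1..n. \<epsilon> i x * Y i x) - \<gamma> / real n * l
      - 1 / (A * real n) * (\<Sum>i=1..n. (Y i x)^2)) = - l + ?B x" for x
  proof -
    have "?B x = (\<Sum>i=1..n. \<epsilon> i x * Y i x) / \<gamma> - (\<Sum>i=1..n. (Y i x)^2) / (A * \<gamma>)"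
      by (simp add: sum_subtractf sum_divide_distrib mult.commute)
    moreover have "real n / \<gamma> * ((1 / real n) * (\<Sum>i=1..n. \<epsilon> i x * Y i x) - \<gamma> / real n * l
        - 1 / (A * real n) * (\<Sum>i=1..n. (Y i x)^2))
        = - l + ((\<Sum>i=1..n. \<epsilon> i x * Y i x) / \<gamma> - (\<Sum>i=1..n. (Y i x)^2) / (A * \<gamma>))"
      using \<open>n > 0\<close> \<open>\<gamma> > 0\<close> \<open>A > 0\<close> by (simp add: field_simps)
    ultimately show ?thesis by simp
  qed
  then have "(\<integral>\<^sup>+x. ennreal (exp (real n / \<gamma> * ((1 / real n) * (\<Sum>i=1..n. \<epsilon> i x * Y i x) - \<gamma> / real n * l
      - 1 / (A * real n) * (\<Sum>i=1..n. (Y i x)^2)))) \<partial>M)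
      = (\<integral>\<^sup>+x. ennreal (exp (- l)) * ennreal (exp (?B x)) \<partial>M)"
    by (simp add: ennreal_mult[symmetric] exp_diff exp_minus divide_inverse mult.commute)
  also have "\<dots> = ennreal (exp (- l)) * (\<integral>\<^sup>+x. ennreal (exp (?B x)) \<partial>M)"
    by (intro nn_integral_cmult) measurable
  also have "\<dots> \<le> ennreal (exp (- l)) * 1"
    using \<open>A > 0\<close> \<open>\<eta> > 0\<close> \<open>K > 0\<close> Y_meas Y_bd
    by (intro mult_left_mono nn_integral_exp_bernstein_sum_le_1[OF _ eps_meas indep mgf])
      (auto simp: \<gamma>_def)
  finally show ?thesis by simp
qed

lemma penalized_SUP_pos_part_le_neg_part:
  fixes \<epsilon> :: "nat \<Rightarrow> 'a \<Rightarrow> real" and Y :: "'g \<Rightarrow> nat \<Rightarrow> 'a \<Rightarrow> real"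
    and n :: nat and \<sigma> \<eta> K A :: real and G :: "'g set" and L :: "'g \<Rightarrow> real"
  assumes eps_meas: "\<And>i. i \<in> {1..n} \<Longrightarrow> \<epsilon> i \<in> borel_measurable M"
    and eps_int: "\<And>i. i \<in> {1..n} \<Longrightarrow> integrable M (\<epsilon> i)"
    and indep: "cond_indep_vars M F \<epsilon> {1..n}"
    and mean0: "\<And>i. i \<in> {1..n} \<Longrightarrow> AE w in M. real_cond_exp M F (\<epsilon> i) w = 0"
    and var_bd: "\<And>i. i \<in> {1..n} \<Longrightarrow> AE w in M. cond_var M F (\<epsilon> i) w \<le> ennreal (\<sigma>^2)"
    and bernstein: "\<And>i k. i \<in> {1..n} \<Longrightarrow> k \<ge> 3 \<Longrightarrow>
      AE w in M. nn_cond_exp M F (\<lambda>v. ennreal (\<bar>\<epsilon> i v\<bar> ^ k)) w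
        \<le> ennreal (1/2 * fact k * \<eta> ^ (k - 2)) * cond_var M F (\<epsilon> i) w"
    and "\<eta> > 0" and "countable G"
    and Y_meas: "\<And>g i. g \<in> G \<Longrightarrow> i \<in> {1..n} \<Longrightarrow> Y g i \<in> borel_measurable F"
    and Y_bd: "\<And>g i w. g \<in> G \<Longrightarrow> i \<in> {1..n} \<Longrightarrow> w \<in> space M \<Longrightarrow> \<bar>Y g i w\<bar> \<le> K"
    and L_nonneg: "\<And>g. g \<in> G \<Longrightarrow> L g \<ge> 0"
    and kraft: "(\<Sum>\<^sub>\<infinity>g\<in>G. ennreal (exp (- L g))) \<le> 1"
    and "A > 0"
  shows "let \<gamma> = A * \<sigma>^2 / 2 + K * \<eta>;
             S = (\<lambda>w. SUP g\<in>G. ereal ((1 / real n) * (\<Sum>i=1..n. \<epsilon> i w * Y g i w)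
                                        - \<gamma> / real n * L g
                                        - 1 / (A * real n) * (\<Sum>i=1..n. (Y g i w)^2)))
         in (\<integral>\<^sup>+ w. e2ennreal (S w) \<partial>M) \<le> (\<integral>\<^sup>+ w. e2ennreal (- S w) \<partial>M)"
proof -
  define \<gamma> where "\<gamma> = A * \<sigma>^2 / 2 + K * \<eta>"
  define Z where "Z g w = (1 / real n) * (\<Sum>i=1..n. \<epsilon> i w * Y g i w) - \<gamma> / real n * L g
    - 1 / (A * real n) * (\<Sum>i=1..n. (Y g i w)^2)" for g w
  have Z_M: "Z g \<in> borel_measurable M" if "g \<in> G" for g
    unfolding Z_def using eps_meas measurable_from_subalg[OF subalg Y_meas[OF that]] by measurable
  have "(\<integral>\<^sup>+ w. e2ennreal (SUP g\<in>G. ereal (Z g w)) \<partial>M)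
      \<le> (\<integral>\<^sup>+ w. e2ennreal (- (SUP g\<in>G. ereal (Z g w))) \<partial>M)"
  proof (cases "n = 0 \<or> G = {} \<or> K \<le> 0")
    case True
    have "(SUP g\<in>G. ereal (Z g w)) \<le> 0" if "w \<in> space M" for w
      unfolding Z_def \<gamma>_def using True \<open>A > 0\<close> Y_bd[OF _ _ that] L_nonneg
      by (rule degenerate_penalized_SUP_nonpos)
    then have "(\<integral>\<^sup>+ w. e2ennreal (SUP g\<in>G. ereal (Z g w)) \<partial>M) = (\<integral>\<^sup>+ w. 0 \<partial>M)"
      by (intro nn_integral_cong) (simp add: e2ennreal_neg)
    then show ?thesis by simp
  next
    case False
    then have "n > 0" "G \<noteq> {}" "K > 0" by auto
    define c where "c = real n / \<gamma>"
    have "c > 0" using \<open>n > 0\<close> \<open>A > 0\<close> \<open>\<eta> > 0\<close> \<open>K > 0\<close> by (simp add: c_def \<gamma>_def add_nonneg_pos)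
    have mgf: "AE x in M. nn_cond_exp M F (\<lambda>x. ennreal (exp (v * \<epsilon> i x))) x \<le> bernstein_mgf \<eta> (\<sigma>^2) v"
      if "i \<in> {1..n}" for i v
      using eps_meas eps_int mean0 var_bd bernstein \<open>\<eta> > 0\<close> that
      by (intro nn_cond_exp_exp_le_bernstein_mgf) auto
    have "(\<integral>\<^sup>+x. ennreal (exp (c * Z g x)) \<partial>M) \<le> ennreal (exp (- L g))" if "g \<in> G" for g
      unfolding c_def Z_def \<gamma>_def
      using \<open>n > 0\<close> eps_meas indep mgf \<open>A > 0\<close> \<open>\<eta> > 0\<close> \<open>K > 0\<close> Y_meas[OF that] Y_bd[OF that]
      by (rule nn_integral_exp_penalized_le)
    then have "(\<Sum>\<^sub>\<infinity>g\<in>G. \<integral>\<^sup>+x. ennreal (exp (c * Z g x)) \<partial>M) \<le> (\<Sum>\<^sub>\<infinity>g\<in>G. ennreal (exp (- L g)))"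
      by (intro infsum_mono nonneg_summable_on_complete) auto
    moreover have "(\<integral>\<^sup>+x. (SUP g\<in>G. ennreal (exp (c * Z g x))) \<partial>M)
        \<le> (\<Sum>\<^sub>\<infinity>g\<in>G. \<integral>\<^sup>+x. ennreal (exp (c * Z g x)) \<partial>M)"
      using \<open>countable G\<close> Z_M by (intro nn_integral_SUP_le_infsum) auto
    ultimately have "(\<integral>\<^sup>+x. (SUP g\<in>G. ennreal (exp (c * Z g x))) \<partial>M) \<le> 1"
      using kraft by order
    then show ?thesis
      using \<open>countable G\<close> \<open>G \<noteq> {}\<close> \<open>c > 0\<close> Z_M by (intro nn_integral_SUP_pos_part_le_neg_part)
  qed
  then show ?thesis unfolding Let_def Z_def \<gamma>_def .
qed

end

lemma
  assumes "\<And>i. i \<in> I \<Longrightarrow> X i \<in> M \<rightarrow>\<^sub>M N"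
  shows subalgebra_gen_subalg: "subalgebra M (gen_subalg M N X I)"
    and sets_gen_subalg:
      "sets (gen_subalg M N X I) = sigma_sets (space M) (\<Union>i\<in>I. {X i -` B \<inter> space M | B. B \<in> sets N})"
proof -
  let ?E = "\<Union>i\<in>I. {X i -` B \<inter> space M | B. B \<in> sets N}"
  have E: "?E \<subseteq> Pow (space M)" "?E \<subseteq> sets M"
    using assms by (auto simp: measurable_sets)
  have sub: "subalgebra M (sigma (space M) ?E)"
    using E sets.sigma_sets_subset[OF E(2)] unfolding subalgebra_def by simp
  then show "subalgebra M (gen_subalg M N X I)"
    unfolding gen_subalg_def by (auto simp: subalgebra_def space_restr_to_subalg sets_restr_to_subalg)
  show "sets (gen_subalg M N X I) = sigma_sets (space M) ?E"
    using sub E unfolding gen_subalg_def by (simp add: sets_restr_to_subalg)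
qed

lemma measurable_gen_subalg:
  assumes X: "\<And>i. i \<in> I \<Longrightarrow> X i \<in> M \<rightarrow>\<^sub>M N" and "i \<in> I"
  shows "X i \<in> gen_subalg M N X I \<rightarrow>\<^sub>M N"
proof (rule measurableI)
  have "subalgebra M (gen_subalg M N X I)" using X by (rule subalgebra_gen_subalg)
  then have space: "space (gen_subalg M N X I) = space M" by (simp add: subalgebra_def)
  have sets: "sets (gen_subalg M N X I) = sigma_sets (space M) (\<Union>i\<in>I. {X i -` B \<inter> space M | B. B \<in> sets N})"
    using X by (rule sets_gen_subalg)
  show "X i x \<in> space N" if "x \<in> space (gen_subalg M N X I)" for x
    using that X[OF \<open>i \<in> I\<close>] by (auto simp: space measurable_space)
  show "X i -` B \<inter> space (gen_subalg M N X I) \<in> sets (gen_subalg M N X I)" if "B \<in> sets N" for B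
    using that \<open>i \<in> I\<close> unfolding sets space by (intro sigma_sets.Basic) auto
qed

theorem lemma2:
  fixes M :: "'a measure" and N :: "'x measure"
    and X :: "nat \<Rightarrow> 'a \<Rightarrow> 'x" and \<epsilon> :: "nat \<Rightarrow> 'a \<Rightarrow> real"
    and n :: nat and \<sigma> \<eta> K A :: real
    and \<G> :: "('x \<Rightarrow> real) set" and L :: "('x \<Rightarrow> real) \<Rightarrow> real"
  assumes "prob_space M"
    and X_meas: "\<And>i. i \<in> {1..n} \<Longrightarrow> X i \<in> M \<rightarrow>\<^sub>M N"
    and eps_meas: "\<And>i. i \<in> {1..n} \<Longrightarrow> \<epsilon> i \<in> borel_measurable M"
    and eps_int: "\<And>i. i \<in> {1..n} \<Longrightarrow> integrable M (\<epsilon> i)"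
    and cind: "cond_indep_vars M (gen_subalg M N X {1..n}) \<epsilon> {1..n}"
    and mean0: "\<And>i. i \<in> {1..n} \<Longrightarrow>
                  AE w in M. real_cond_exp M (gen_subalg M N X {1..n}) (\<epsilon> i) w = 0"
    and var_bd: "\<And>i. i \<in> {1..n} \<Longrightarrow>
                  AE w in M. cond_var M (gen_subalg M N X {1..n}) (\<epsilon> i) w \<le> ennreal (\<sigma>^2)"
    and bernstein: "\<And>i k. i \<in> {1..n} \<Longrightarrow> k \<ge> 3 \<Longrightarrow>
                  AE w in M. nn_cond_exp M (gen_subalg M N X {1..n}) (\<lambda>v. ennreal (\<bar>\<epsilon> i v\<bar> ^ k)) w
                     \<le> ennreal (1/2 * fact k * \<eta> ^ (k - 2)) * cond_var M (gen_subalg M N X {1..n}) (\<epsilon> i) w"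
    and "\<eta> > 0"
    and "countable \<G>"
    and G_meas: "\<And>g. g \<in> \<G> \<Longrightarrow> g \<in> borel_measurable N"
    and G_bd: "\<And>g x. g \<in> \<G> \<Longrightarrow> \<bar>g x\<bar> \<le> K"
    and L_nonneg: "\<And>g. g \<in> \<G> \<Longrightarrow> L g \<ge> 0"
    and kraft: "(\<Sum>\<^sub>\<infinity>g\<in>\<G>. ennreal (exp (- L g))) \<le> 1"
    and "A > 0"
  shows "let \<gamma> = A * \<sigma>^2 / 2 + K * \<eta>;
             S = (\<lambda>w. SUP g\<in>\<G>. ereal ((1 / real n) * (\<Sum>i=1..n. \<epsilon> i w * g (X i w))
                                        - \<gamma> / real n * L g
                                        - 1 / (A * real n) * (\<Sum>i=1..n. (g (X i w))^2)))
         in (\<integral>\<^sup>+ w. e2ennreal (S w) \<partial>M) \<le> (\<integral>\<^sup>+ w. e2ennreal (- S w) \<partial>M)"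
proof -
  let ?F = "gen_subalg M N X {1..n}"
  have "subalgebra M ?F" using X_meas by (rule subalgebra_gen_subalg)
  with \<open>prob_space M\<close> interpret prob_space_subalgebra M ?F
    by (simp add: prob_space_subalgebra_def finite_measure_subalgebra_def
        finite_measure_subalgebra_axioms_def prob_space_def)
  have "(\<lambda>w. g (X i w)) \<in> borel_measurable ?F" if "g \<in> \<G>" "i \<in> {1..n}" for g i
  proof -
    have "X i \<in> ?F \<rightarrow>\<^sub>M N" using X_meas \<open>i \<in> {1..n}\<close> by (rule measurable_gen_subalg)
    then show ?thesis using G_meas[OF \<open>g \<in> \<G>\<close>] by (rule measurable_compose)
  qed
  then show ?thesis
    by (intro penalized_SUP_pos_part_le_neg_part[OF eps_meas eps_int cind mean0 var_bd bernstein])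
       (use assms in auto)
qed

end
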